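(* Let $p$ be an odd prime. If $\lambda$ is a nonempty BG-partition, then $\lambda^{(1)*}$ is a BG-partition; i.e. removing the $p$-rim* of a BG-partition yields a BG-partition.
   Context: Partitions: $\lambda=(\lambda_1\ge\lambda_2\ge\cdots)$ with finitely many nonzero parts; $l(\lambda)$ = number of nonzero parts; Young diagram $[\lambda]=\{(i,j): i\ge1, 1\le j\le\lambda_i\}$ ($i$ = row, increasing downward). $\lambda'$ is the conjugate; self-conjugate means $\lambda=\lambda'$. $k(\lambda)=\max\{i:\lambda_i\ge i\}$; hook length $h_{ij}=\lambda_i+\lambda'_j-i-j+1$. A BG-partition is a self-conjugate partition with $p\nmid h_{ii}$ for all $1\le i\le k(\lambda)$ (the empty partition counts as one). Rim and $p$-rim: the rim is the set of nodes $(i,j)\in[\lambda]$ with $(i+1,j+1)\notin[\lambda]$. Label rim nodes $1,2,\dots$ along the rim path from $(1,\lambda_1)$ to $(l(\lambda),1)$. The first $p$-segment is the rim nodes labelled $1,\dots,p$ (or all if fewer). If the last node $(i,j)$ of a $p$-segment lies in the last row, stop; otherwise with $l$ the smallest label in row $i+1$ the next $p$-segment is the rim nodes labelled $l,\dots,l+p-1$ (or up to the last). The $p$-rim is the union of the $p$-segments. $p$-rim*: $U_\lambda=\{(i,j)\in p\text{-rim of }\lambda: i\le j\}$, $L_\lambda=\{(j,i):(i,j)\in U_\lambda\}$, $\mathrm{Rim}^*_p(\lambda)=U_\lambda\cup L_\lambda$. $\lambda^{(1)*}$ is the partition with Young diagram $[\lambda]\setminus\mathrm{Rim}^*_p(\lambda)$.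 *)

theory Defs
  imports "HOL-Computational_Algebra.Primes"
begin

text \<open>A partition is represented by the list of its nonzero parts
  [lambda_1, lambda_2, ...], weakly decreasing and positive.  Rows and
  columns are 1-indexed.\<close>

definition is_partition :: "nat list \<Rightarrow> bool" where
  "is_partition lam \<longleftrightarrow> sorted_wrt (\<ge>) lam \<and> (\<forall>x\<in>set lam. 0 < x)"

definition part :: "nat list \<Rightarrow> nat \<Rightarrow> nat" where
  "part lam i = (if 1 \<le> i \<and> i \<le> length lam then lam ! (i - 1) else 0)"

definition plen :: "nat list \<Rightarrow> nat" where
  "plen lam = length lam"

definition diagram :: "nat list \<Rightarrow> (nat \<times> nat) set" where
  "diagram lam = {(i, j). 1 \<le> i \<and> 1 \<le> j \<and> j \<le> part lam i}"

definition conj_part :: "nat list \<Rightarrow> nat \<Rightarrow> nat" where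
  "conj_part lam j = card {i \<in> {1..length lam}. j \<le> part lam i}"

definition self_conjugate :: "nat list \<Rightarrow> bool" where
  "self_conjugate lam \<longleftrightarrow> (\<forall>i\<ge>1. part lam i = conj_part lam i)"

definition kdiag :: "nat list \<Rightarrow> nat" where
  "kdiag lam = Max ({0} \<union> {i. 1 \<le> i \<and> i \<le> part lam i})"

definition hook :: "nat list \<Rightarrow> nat \<Rightarrow> nat \<Rightarrow> int" where
  "hook lam i j = int (part lam i) + int (conj_part lam j) - int i - int j + 1"

definition BG_partition :: "nat \<Rightarrow> nat list \<Rightarrow> bool" where
  "BG_partition p lam \<longleftrightarrow> is_partition lam \<and> self_conjugate lam \<and>
     (\<forall>i. 1 \<le> i \<and> i \<le> kdiag lam \<longrightarrow> \<not> (int p dvd hook lam i i))"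

definition rim :: "nat list \<Rightarrow> (nat \<times> nat) set" where
  "rim lam = {(i, j) \<in> diagram lam. (i + 1, j + 1) \<notin> diagram lam}"

text \<open>The rim nodes listed along the rim path from (1, lambda_1) to (l, 1):
  the path goes rows top to bottom, and within a row right to left.
  Label of the node at list index t is t + 1.\<close>
definition rim_list :: "nat list \<Rightarrow> (nat \<times> nat) list" where
  "rim_list lam = filter (\<lambda>x. x \<in> rim lam)
     (concat (map (\<lambda>i. map (\<lambda>j. (i, j)) (rev [1..<part lam i + 1])) [1..<plen lam + 1]))"

definition rim_node :: "nat list \<Rightarrow> nat \<Rightarrow> nat \<times> nat" where
  "rim_node lam t = rim_list lam ! (t - 1)"

definition seg_end :: "nat \<Rightarrow> nat list \<Rightarrow> nat \<Rightarrow> nat" where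
  "seg_end p lam s = min (s + p - 1) (length (rim_list lam))"

inductive seg_start :: "nat \<Rightarrow> nat list \<Rightarrow> nat \<Rightarrow> bool" for p lam where
  seg_first: "seg_start p lam 1"
| seg_next: "\<lbrakk> seg_start p lam s;
           fst (rim_node lam (seg_end p lam s)) < plen lam \<rbrakk>
         \<Longrightarrow> seg_start p lam
               (LEAST t. 1 \<le> t \<and> t \<le> length (rim_list lam) \<and>
                         fst (rim_node lam t) = fst (rim_node lam (seg_end p lam s)) + 1)"

definition p_rim :: "nat \<Rightarrow> nat list \<Rightarrow> (nat \<times> nat) set" where
  "p_rim p lam = {rim_node lam t | s t. seg_start p lam s \<and> s \<le> t \<and> t \<le> seg_end p lam s}"

definition rim_star :: "nat \<Rightarrow> nat list \<Rightarrow> (nat \<times> nat) set" where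
  "rim_star p lam =
     (let U = {(i, j) \<in> p_rim p lam. i \<le> j} in U \<union> {(j, i) | i j. (i, j) \<in> U})"

end

theory Submission
  imports Defs
begin

text \<open>
  Give the cell (i, j) the content j - i.  Along the rim path the content drops by one at each
  step, so the rim cell with label t is the one of content \<lambda>_1 - t, and every
  p-segment starts at the last cell of a row.  For self-conjugate \<lambda> the diagonal hook
  h_ii is 2 c + 1, where c is the content of the last cell of row i.
  Removing the symmetrised p-rim leaves a symmetric, down-closed set of cells, i.e. the diagram
  of a self-conjugate partition \<mu>.  If row m of \<mu> meets the diagonal, its last cell is
  either the last cell of row m or m + 1 of \<lambda> with the same content, or it follows a
  complete p-segment of the rim, which starts at the last cell of a row of \<lambda> with content
  larger by exactly p.  So each diagonal hook of \<mu> differs from one of \<lambda> by 0 or 2p.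
\<close>

definition content :: "nat \<times> nat \<Rightarrow> int" where
  "content x = int (snd x) - int (fst x)"

lemma mem_diagram: "(i, j) \<in> diagram lam \<longleftrightarrow> 1 \<le> i \<and> 1 \<le> j \<and> j \<le> part lam i"
  unfolding diagram_def by simp

lemma mem_rim: "(i, j) \<in> rim lam \<longleftrightarrow> (i, j) \<in> diagram lam \<and> (i + 1, j + 1) \<notin> diagram lam"
  unfolding rim_def by simp

lemma hook_diag_self_conjugate:
  assumes "self_conjugate lam" "1 \<le> i"
  shows "hook lam i i = 2 * content (i, part lam i) + 1"
  using assms unfolding hook_def self_conjugate_def content_def by simp

lemma down_closed_eq_atLeastAtMost_card:
  assumes "finite S" "\<And>j. j \<in> S \<Longrightarrow> 1 \<le> j"
    and "\<And>j j'. j \<in> S \<Longrightarrow> 1 \<le> j' \<Longrightarrow> j' \<le> j \<Longrightarrow> j' \<in> S"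
  shows "S = {1..card S}"
proof (cases "S = {}")
  case False
  have "S = {1..Max S}"
  proof
    show "S \<subseteq> {1..Max S}" using assms(2) Max_ge[OF assms(1)] by auto
    show "{1..Max S} \<subseteq> S" using assms(3)[OF Max_in[OF assms(1) False]] by auto
  qed
  then show ?thesis by (metis card_atLeastAtMost diff_Suc_1)
qed simp

lemma down_closed_mem_iff:
  fixes D :: "(nat \<times> nat) set"
  assumes fin: "finite D" and pos: "\<And>i j. (i, j) \<in> D \<Longrightarrow> 1 \<le> i \<and> 1 \<le> j"
    and dc: "\<And>i j i' j'. (i, j) \<in> D \<Longrightarrow> 1 \<le> i' \<Longrightarrow> i' \<le> i \<Longrightarrow> 1 \<le> j' \<Longrightarrow> j' \<le> j \<Longrightarrow> (i', j') \<in> D"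
  shows "(i, j) \<in> D \<longleftrightarrow> 1 \<le> i \<and> 1 \<le> j \<and> j \<le> card {j. (i, j) \<in> D}"
proof (cases "1 \<le> i")
  case True
  have "finite {j. (i, j) \<in> D}"
    by (rule finite_subset[OF _ finite_imageI[OF fin, of snd]]) force
  then have "{j. (i, j) \<in> D} = {1..card {j. (i, j) \<in> D}}"
    by (rule down_closed_eq_atLeastAtMost_card) (use pos dc[of i _ i] True in auto)
  then have "j \<in> {j. (i, j) \<in> D} \<longleftrightarrow> j \<in> {1..card {j. (i, j) \<in> D}}"
    by (rule arg_cong[where f = "\<lambda>S. j \<in> S"])
  with True show ?thesis by simp
qed (use pos in auto)

lemma diagram_of_down_closed:
  fixes D :: "(nat \<times> nat) set"
  assumes fin: "finite D" and pos: "\<And>i j. (i, j) \<in> D \<Longrightarrow> 1 \<le> i \<and> 1 \<le> j"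
    and dc: "\<And>i j i' j'. (i, j) \<in> D \<Longrightarrow> 1 \<le> i' \<Longrightarrow> i' \<le> i \<Longrightarrow> 1 \<le> j' \<Longrightarrow> j' \<le> j \<Longrightarrow> (i', j') \<in> D"
  shows "\<exists>mu. is_partition mu \<and> diagram mu = D"
proof -
  define r where "r i = card {j. (i, j) \<in> D}" for i
  define m where "m = card {i. (i, 1) \<in> D}"
  have mem_D: "(i, j) \<in> D \<longleftrightarrow> 1 \<le> i \<and> 1 \<le> j \<and> j \<le> r i" for i j
    unfolding r_def using down_closed_mem_iff[OF assms] .
  have "finite {i. (i, 1::nat) \<in> D}"
    by (rule finite_subset[OF _ finite_imageI[OF fin, of fst]]) force
  then have first_column: "{i. (i, 1::nat) \<in> D} = {1..m}"
    unfolding m_def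
    by (rule down_closed_eq_atLeastAtMost_card) (use pos dc[of _ 1 _ 1] in auto)
  have "{j. (0, j) \<in> D} = {}" using pos by fastforce
  then have r_pos_iff: "0 < r i \<longleftrightarrow> 1 \<le> i \<and> i \<le> m" for i
    using mem_D[of i 1] first_column unfolding r_def by (cases "i = 0") auto
  have r_antimono: "r i' \<le> r i" if "1 \<le> i" "i \<le> i'" for i i'
  proof -
    have "{j. (i', j) \<in> D} \<subseteq> {j. (i, j) \<in> D}" using dc pos that by blast
    moreover have "finite {j. (i, j) \<in> D}"
      by (rule finite_subset[OF _ finite_imageI[OF fin, of snd]]) force
    ultimately show ?thesis unfolding r_def by (rule card_mono[rotated])
  qed
  define mu where "mu = map r [1..<m + 1]"
  have part_mu: "part mu i = r i" if "1 \<le> i" for i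
    using that r_pos_iff[of i] unfolding part_def mu_def by (auto simp: nth_map_upt simp del: upt_Suc)
  have "sorted_wrt (\<ge>) mu"
    unfolding mu_def sorted_wrt_map
    by (rule sorted_wrt_mono_rel[OF _ sorted_wrt_upt]) (auto intro: r_antimono simp del: upt_Suc)
  moreover have "\<forall>x\<in>set mu. 0 < x"
    unfolding mu_def using r_pos_iff by (auto simp del: upt_Suc)
  ultimately have "is_partition mu" unfolding is_partition_def by blast
  moreover have "diagram mu = D"
    using part_mu by (auto simp: mem_diagram mem_D)
  ultimately show ?thesis by blast
qed

locale partition_list =
  fixes lam :: "nat list"
  assumes is_partition: "is_partition lam"
begin

lemma part_antimono:
  assumes "1 \<le> i" "i \<le> i'"
  shows "part lam i' \<le> part lam i"
proof -
  have "sorted_wrt (\<ge>) lam" using is_partition unfolding is_partition_def by simp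
  then show ?thesis
    using assms by (cases "i = i'") (auto simp: part_def sorted_wrt_iff_nth_less)
qed

lemma part_pos_iff: "0 < part lam i \<longleftrightarrow> 1 \<le> i \<and> i \<le> length lam"
proof -
  have "1 \<le> i \<Longrightarrow> i \<le> length lam \<Longrightarrow> lam ! (i - 1) \<in> set lam" by simp
  then show ?thesis using is_partition unfolding is_partition_def part_def by auto
qed

lemma part_le_part_1: "part lam i \<le> part lam 1"
  using part_antimono[of 1 i] by (cases "i = 0") (auto simp: part_def)

lemma row_le_length: "(i, j) \<in> diagram lam \<Longrightarrow> i \<le> length lam"
  using part_pos_iff by (fastforce simp: mem_diagram)

lemma le_conj_part_iff:
  assumes "1 \<le> i" "1 \<le> j"
  shows "i \<le> conj_part lam j \<longleftrightarrow> j \<le> part lam i"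
proof -
  let ?S = "{i' \<in> {1..length lam}. j \<le> part lam i'}"
  show ?thesis
  proof
    assume "j \<le> part lam i"
    have "{1..i} \<subseteq> ?S"
    proof
      fix x assume x: "x \<in> {1..i}"
      then have "j \<le> part lam x" using part_antimono[of x i] \<open>j \<le> part lam i\<close> by auto
      with x assms show "x \<in> ?S" using part_pos_iff[of x] by auto
    qed
    then show "i \<le> conj_part lam j"
      unfolding conj_part_def using card_mono[of ?S "{1..i}"] by simp
  next
    assume "i \<le> conj_part lam j"
    show "j \<le> part lam i"
    proof (rule ccontr)
      assume "\<not> j \<le> part lam i"
      have "?S \<subseteq> {1..i - 1}"
      proof
        fix x assume x: "x \<in> ?S"
        have "\<not> i \<le> x" using part_antimono[of i x] x assms \<open>\<not> j \<le> part lam i\<close> by auto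
        with x show "x \<in> {1..i - 1}" by auto
      qed
      then show False
        using \<open>i \<le> conj_part lam j\<close> assms card_mono[of "{1..i - 1}" ?S]
        unfolding conj_part_def by simp
    qed
  qed
qed

lemma le_kdiag_iff:
  assumes "1 \<le> i"
  shows "i \<le> kdiag lam \<longleftrightarrow> i \<le> part lam i"
proof -
  let ?S = "{0} \<union> {i. 1 \<le> i \<and> i \<le> part lam i}"
  have fin: "finite ?S"
    by (rule finite_subset[of _ "{..length lam}"]) (use part_pos_iff in fastforce)+
  have "kdiag lam \<in> ?S" unfolding kdiag_def using fin by (intro Max_in) auto
  then have "i \<le> kdiag lam \<Longrightarrow> i \<le> part lam i"
    using part_antimono[of i "kdiag lam"] assms by auto
  moreover have "i \<le> part lam i \<Longrightarrow> i \<le> kdiag lam"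
    unfolding kdiag_def using fin assms by (intro Max_ge) auto
  ultimately show ?thesis by blast
qed

lemma self_conjugate_iff_sym_diagram:
  "self_conjugate lam \<longleftrightarrow> (\<forall>i j. (i, j) \<in> diagram lam \<longrightarrow> (j, i) \<in> diagram lam)"
proof
  assume "self_conjugate lam"
  then show "\<forall>i j. (i, j) \<in> diagram lam \<longrightarrow> (j, i) \<in> diagram lam"
    using le_conj_part_iff unfolding self_conjugate_def by (auto simp: mem_diagram)
next
  assume sym: "\<forall>i j. (i, j) \<in> diagram lam \<longrightarrow> (j, i) \<in> diagram lam"
  have le_iff: "i' \<le> conj_part lam i \<longleftrightarrow> i' \<le> part lam i" if "1 \<le> i" "1 \<le> i'" for i i'
    using le_conj_part_iff[OF that(2,1)] sym that by (auto simp: mem_diagram)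
  have "part lam i = conj_part lam i" if "1 \<le> i" for i
    using le_iff[OF that, of "part lam i"] le_iff[OF that, of "conj_part lam i"]
    by (cases "part lam i = 0"; cases "conj_part lam i = 0") auto
  then show "self_conjugate lam" unfolding self_conjugate_def by blast
qed

lemma BG_partition_iff:
  "BG_partition p lam \<longleftrightarrow> self_conjugate lam \<and>
     (\<forall>i. 1 \<le> i \<and> i \<le> part lam i \<longrightarrow> \<not> int p dvd 2 * content (i, part lam i) + 1)"
proof -
  have "(\<forall>i. 1 \<le> i \<and> i \<le> kdiag lam \<longrightarrow> \<not> int p dvd hook lam i i) \<longleftrightarrow>
      (\<forall>i. 1 \<le> i \<and> i \<le> part lam i \<longrightarrow> \<not> int p dvd 2 * content (i, part lam i) + 1)"
    if "self_conjugate lam"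
    using le_kdiag_iff hook_diag_self_conjugate[OF that] by auto
  then show ?thesis using is_partition unfolding BG_partition_def by blast
qed

end

lemma sorted_wrt_row_reading:
  "sorted_wrt (\<lambda>x y. fst x < fst y \<or> (fst x = fst y \<and> snd y < snd x))
     (concat (map (\<lambda>i. map (\<lambda>j. (i, j)) (rev [1..<f i + 1])) [a..<b]))"
proof (induction b)
  case (Suc b)
  have "sorted_wrt (\<lambda>x y. fst x < fst y \<or> (fst x = fst y \<and> snd y < snd x))
      (map (\<lambda>j. (b, j)) (rev [1..<f b + 1]))"
    by (simp add: sorted_wrt_map sorted_wrt_rev del: upt_Suc)
  with Suc show ?case by (auto simp: sorted_wrt_append)
qed simp

locale nonempty_partition = partition_list +
  assumes nonempty: "lam \<noteq> []"
begin

lemma length_pos: "1 \<le> length lam"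
  using nonempty by (cases lam) auto

lemma row_end_in_rim:
  assumes "1 \<le> r" "r \<le> length lam"
  shows "(r, part lam r) \<in> rim lam"
  using part_pos_iff[of r] part_antimono[of r "r + 1"] assms by (simp add: mem_rim mem_diagram)

lemma set_rim_list: "set (rim_list lam) = rim lam"
proof -
  have "diagram lam \<subseteq> set (concat (map (\<lambda>i. map (\<lambda>j. (i, j)) (rev [1..<part lam i + 1]))
                                           [1..<plen lam + 1]))"
    using row_le_length by (fastforce simp: mem_diagram plen_def simp del: upt_Suc)
  moreover have "rim lam \<subseteq> diagram lam" unfolding rim_def by blast
  ultimately show ?thesis unfolding rim_list_def set_filter by blast
qed

lemma content_rim_less:
  assumes "x \<in> rim lam" "y \<in> diagram lam" "fst x < fst y \<or> (fst x = fst y \<and> snd y < snd x)"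
  shows "content y < content x"
proof (cases "fst x < fst y")
  case True
  obtain i j where x: "x = (i, j)" by fastforce
  have "part lam (fst y) \<le> part lam (i + 1)" using part_antimono[of "i + 1" "fst y"] True x by simp
  moreover have "part lam (i + 1) \<le> j" using assms(1) x by (auto simp: mem_rim mem_diagram)
  ultimately show ?thesis
    using True assms(2) x by (cases y) (auto simp: content_def mem_diagram)
qed (use assms(3) in \<open>auto simp: content_def\<close>)

lemma sorted_content_rim_list: "sorted_wrt (\<lambda>x y. content y < content x) (rim_list lam)"
proof -
  let ?cells = "concat (map (\<lambda>i. map (\<lambda>j. (i, j)) (rev [1..<part lam i + 1])) [1..<plen lam + 1])"
  have "sorted_wrt (\<lambda>x y. x \<in> rim lam \<longrightarrow> y \<in> set ?cells \<longrightarrow> content y < content x) ?cells"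
    by (rule sorted_wrt_mono_rel[OF _ sorted_wrt_row_reading])
      (use content_rim_less in \<open>force simp: mem_diagram simp del: upt_Suc\<close>)
  then have "sorted_wrt (\<lambda>x y. x \<in> rim lam \<longrightarrow> y \<in> set ?cells \<longrightarrow> content y < content x)
      (rim_list lam)"
    unfolding rim_list_def by (rule sorted_wrt_filter)
  then show ?thesis by (rule sorted_wrt_mono_rel[rotated]) (auto simp: rim_list_def)
qed

lemma content_image_rim: "content ` rim lam = {1 - int (length lam) .. int (part lam 1) - 1}"
proof
  show "content ` rim lam \<subseteq> {1 - int (length lam) .. int (part lam 1) - 1}"
  proof
    fix d assume "d \<in> content ` rim lam"
    then obtain i j where ij: "(i, j) \<in> diagram lam" "d = int j - int i"
      by (auto simp: mem_rim content_def)
    then show "d \<in> {1 - int (length lam) .. int (part lam 1) - 1}"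
      using row_le_length[OF ij(1)] part_le_part_1[of i] by (auto simp: mem_diagram)
  qed
next
  show "{1 - int (length lam) .. int (part lam 1) - 1} \<subseteq> content ` rim lam"
  proof
    fix d assume d: "d \<in> {1 - int (length lam) .. int (part lam 1) - 1}"
    define S where
      "S = {i. 1 \<le> i \<and> i \<le> length lam \<and> 1 \<le> int i + d \<and> nat (int i + d) \<le> part lam i}"
    have "finite S" unfolding S_def by (rule finite_subset[of _ "{..length lam}"]) auto
    have "nat (max 1 (1 - d)) \<in> S"
    proof (cases "0 \<le> d")
      case True
      then show ?thesis using d length_pos unfolding S_def by auto
    next
      case False
      then have "0 < part lam (nat (1 - d))" using d part_pos_iff by auto
      then show ?thesis using False d unfolding S_def by auto
    qed
    then have "S \<noteq> {}" by blast
    define i where "i = Max S"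
    have "i \<in> S" unfolding i_def using \<open>finite S\<close> \<open>S \<noteq> {}\<close> by simp
    then have in_diagram: "(i, nat (int i + d)) \<in> diagram lam"
      unfolding S_def by (auto simp: mem_diagram)
    have "(i + 1, nat (int i + d) + 1) \<notin> diagram lam"
    proof
      assume below: "(i + 1, nat (int i + d) + 1) \<in> diagram lam"
      then have "i + 1 \<in> S"
        using row_le_length[OF below] \<open>i \<in> S\<close> unfolding S_def by (auto simp: mem_diagram)
      then show False using Max_ge[OF \<open>finite S\<close>] unfolding i_def by fastforce
    qed
    with in_diagram have "(i, nat (int i + d)) \<in> rim lam" by (simp add: mem_rim)
    moreover have "content (i, nat (int i + d)) = d"
      using \<open>i \<in> S\<close> unfolding S_def content_def by auto
    ultimately show "d \<in> content ` rim lam" by force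
  qed
qed

lemma map_content_rim_list:
  "map content (rim_list lam) = rev [1 - int (length lam) .. int (part lam 1) - 1]"
proof -
  have "sorted_wrt (<) (rev (map content (rim_list lam)))"
    using sorted_content_rim_list by (simp add: sorted_wrt_rev sorted_wrt_map)
  then have "rev (map content (rim_list lam)) = [1 - int (length lam) .. int (part lam 1) - 1]"
    by (intro sorted_distinct_set_unique)
      (auto simp: strict_sorted_iff set_rim_list content_image_rim)
  then show ?thesis by (metis rev_rev_ident)
qed

lemma length_rim_list: "length (rim_list lam) = part lam 1 + length lam - 1"
  using arg_cong[OF map_content_rim_list, of length] by simp

lemma rim_node_in_rim:
  assumes "1 \<le> t" "t \<le> length (rim_list lam)"
  shows "rim_node lam t \<in> rim lam"
  using assms set_rim_list nth_mem[of "t - 1" "rim_list lam"] unfolding rim_node_def by auto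

lemma content_rim_node:
  assumes "1 \<le> t" "t \<le> length (rim_list lam)"
  shows "content (rim_node lam t) = int (part lam 1) - int t"
proof -
  let ?contents = "[1 - int (length lam) .. int (part lam 1) - 1]"
  have len: "length ?contents = part lam 1 + length lam - 1"
    using length_rim_list map_content_rim_list by (metis length_map length_rev)
  have "content (rim_node lam t) = map content (rim_list lam) ! (t - 1)"
    unfolding rim_node_def using assms by simp
  also have "\<dots> = ?contents ! (part lam 1 + length lam - 1 - t)"
    using assms len length_rim_list
    by (simp only: map_content_rim_list) (simp add: rev_nth del: length_upto)
  also have "\<dots> = int (part lam 1) - int t"
    using assms by (subst nth_upto) (auto simp: length_rim_list of_nat_diff)
  finally show ?thesis .
qed

definition rim_label :: "nat \<times> nat \<Rightarrow> nat" where
  "rim_label x = nat (int (part lam 1) - content x)"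

lemma rim_label_rim_node:
  assumes "1 \<le> t" "t \<le> length (rim_list lam)"
  shows "rim_label (rim_node lam t) = t"
  using content_rim_node[OF assms] unfolding rim_label_def by simp

lemma rim_label_bounds:
  assumes "x \<in> rim lam"
  shows "1 \<le> rim_label x" "rim_label x \<le> length (rim_list lam)"
    and "int (rim_label x) = int (part lam 1) - content x"
proof -
  have "content x \<in> {1 - int (length lam) .. int (part lam 1) - 1}"
    using assms content_image_rim by blast
  then show "1 \<le> rim_label x" "rim_label x \<le> length (rim_list lam)"
    and "int (rim_label x) = int (part lam 1) - content x"
    unfolding rim_label_def length_rim_list by auto
qed

lemma rim_node_rim_label: "x \<in> rim lam \<Longrightarrow> rim_node lam (rim_label x) = x"
proof -
  assume "x \<in> rim lam"
  then obtain n where "n < length (rim_list lam)" "x = rim_list lam ! n"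
    using set_rim_list by (metis in_set_conv_nth)
  then show ?thesis
    using rim_label_rim_node[of "n + 1"] unfolding rim_node_def by simp
qed

lemma rim_label_next:
  assumes "x \<in> rim lam" "y \<in> rim lam" "content y = content x - 1"
  shows "rim_label y = rim_label x + 1"
  using rim_label_bounds(3)[OF assms(1)] rim_label_bounds(3)[OF assms(2)] assms(3) by simp

end

locale p_segments = nonempty_partition +
  fixes p :: nat
  assumes p_pos: "1 \<le> p"
begin

lemma Least_rim_node_in_row:
  assumes "i < length lam"
  shows "(LEAST t. 1 \<le> t \<and> t \<le> length (rim_list lam) \<and> fst (rim_node lam t) = i + 1)
         = rim_label (i + 1, part lam (i + 1))"
proof (rule Least_equality)
  let ?y = "(i + 1, part lam (i + 1))"
  have y: "?y \<in> rim lam" using row_end_in_rim[of "i + 1"] assms by simp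
  show "1 \<le> rim_label ?y \<and> rim_label ?y \<le> length (rim_list lam)
        \<and> fst (rim_node lam (rim_label ?y)) = i + 1"
    using rim_label_bounds[OF y] rim_node_rim_label[OF y] by simp
  fix t assume t: "1 \<le> t \<and> t \<le> length (rim_list lam) \<and> fst (rim_node lam t) = i + 1"
  then have "rim_node lam t \<in> rim lam" using rim_node_in_rim by blast
  then have "content (rim_node lam t) \<le> content ?y"
    using t by (cases "rim_node lam t") (auto simp: mem_rim mem_diagram content_def)
  then show "rim_label ?y \<le> t"
    using rim_label_bounds(3)[OF y] content_rim_node[of t] t by simp
qed

lemma seg_start_row_end:
  "seg_start p lam s \<Longrightarrow> \<exists>r. 1 \<le> r \<and> r \<le> length lam \<and> s = rim_label (r, part lam r)"
proof (induction rule: seg_start.induct)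
  case seg_first
  have "rim_label (1, part lam 1) = 1" unfolding rim_label_def content_def by simp
  then show ?case using length_pos by (intro exI[of _ 1]) simp
next
  case (seg_next s)
  let ?i = "fst (rim_node lam (seg_end p lam s))"
  have "?i < length lam" using seg_next.hyps(2) by (simp add: plen_def)
  then show ?case using Least_rim_node_in_row by (intro exI[of _ "?i + 1"]) simp
qed

lemma seg_start_bounds:
  assumes "seg_start p lam s"
  shows "1 \<le> s" "s \<le> seg_end p lam s" "seg_end p lam s \<le> length (rim_list lam)"
proof -
  obtain r where "1 \<le> r" "r \<le> length lam" "s = rim_label (r, part lam r)"
    using seg_start_row_end[OF assms] by blast
  then have "1 \<le> s" "s \<le> length (rim_list lam)"
    using rim_label_bounds[OF row_end_in_rim] by auto
  then show "1 \<le> s" "s \<le> seg_end p lam s" "seg_end p lam s \<le> length (rim_list lam)"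
    using p_pos unfolding seg_end_def by auto
qed

lemma seg_start_next_row:
  assumes "seg_start p lam s" "fst (rim_node lam (seg_end p lam s)) = i" "i < length lam"
  shows "seg_start p lam (rim_label (i + 1, part lam (i + 1)))"
  using seg_next[OF assms(1)] assms Least_rim_node_in_row by (simp add: plen_def)

lemma p_rim_eq: "p_rim p lam =
  {x \<in> rim lam. \<exists>s. seg_start p lam s \<and> s \<le> rim_label x \<and> rim_label x \<le> seg_end p lam s}"
proof (intro set_eqI iffI)
  fix x assume "x \<in> p_rim p lam"
  then obtain s t where st: "seg_start p lam s" "s \<le> t" "t \<le> seg_end p lam s" "x = rim_node lam t"
    unfolding p_rim_def by blast
  then have "1 \<le> t" "t \<le> length (rim_list lam)" using seg_start_bounds[OF st(1)] by auto
  then show "x \<in> {x \<in> rim lam. \<exists>s. seg_start p lam s \<and> s \<le> rim_label x \<and> rim_label x \<le> seg_end p lam s}"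
    using st rim_node_in_rim rim_label_rim_node by auto
next
  fix x
  assume "x \<in> {x \<in> rim lam. \<exists>s. seg_start p lam s \<and> s \<le> rim_label x \<and> rim_label x \<le> seg_end p lam s}"
  then obtain s where "x \<in> rim lam" "seg_start p lam s"
    and "s \<le> rim_label x" "rim_label x \<le> seg_end p lam s"
    by blast
  then show "x \<in> p_rim p lam"
    unfolding p_rim_def using rim_node_rim_label[of x, symmetric] by blast
qed

lemma p_rim_segment_start:
  assumes "y \<in> p_rim p lam" "x \<in> rim lam" "x \<notin> p_rim p lam" "rim_label y = rim_label x + 1"
  shows "snd y = part lam (fst y)"
proof -
  obtain s where s: "seg_start p lam s" "s \<le> rim_label y" "rim_label y \<le> seg_end p lam s"
    and y: "y \<in> rim lam"
    using assms(1) unfolding p_rim_eq by blast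
  have "s = rim_label y"
  proof (rule ccontr)
    assume "s \<noteq> rim_label y"
    then have "x \<in> p_rim p lam" using s assms(2,4) unfolding p_rim_eq by auto
    with assms(3) show False ..
  qed
  moreover obtain r where "1 \<le> r" "r \<le> length lam" "s = rim_label (r, part lam r)"
    using seg_start_row_end[OF s(1)] by blast
  ultimately have "y = (r, part lam r)"
    using rim_node_rim_label[OF y] rim_node_rim_label[OF row_end_in_rim] by metis
  then show ?thesis by simp
qed

lemma p_rim_segment_end:
  assumes "x \<in> p_rim p lam" "y \<in> rim lam" "y \<notin> p_rim p lam" "rim_label y = rim_label x + 1"
  obtains s where "seg_start p lam s" "rim_label x = seg_end p lam s"
proof -
  obtain s where s: "seg_start p lam s" "s \<le> rim_label x" "rim_label x \<le> seg_end p lam s"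
    using assms(1) unfolding p_rim_eq by blast
  have "rim_label x = seg_end p lam s"
  proof (rule ccontr)
    assume "rim_label x \<noteq> seg_end p lam s"
    then have "y \<in> p_rim p lam" using s assms(2,4) unfolding p_rim_eq by auto
    with assms(3) show False ..
  qed
  with s(1) show ?thesis by (rule that)
qed

lemma p_rim_next_row_end:
  assumes "x \<in> p_rim p lam" "fst x < length lam"
    and "rim_label (fst x + 1, part lam (fst x + 1)) = rim_label x + 1"
  shows "(fst x + 1, part lam (fst x + 1)) \<in> p_rim p lam"
proof (rule ccontr)
  let ?y = "(fst x + 1, part lam (fst x + 1))"
  have y: "?y \<in> rim lam" using row_end_in_rim assms(2) by simp
  assume "?y \<notin> p_rim p lam"
  then obtain s where s: "seg_start p lam s" "rim_label x = seg_end p lam s"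
    using p_rim_segment_end[OF assms(1) y _ assms(3)] by blast
  have "x \<in> rim lam" using assms(1) unfolding p_rim_eq by blast
  then have "fst (rim_node lam (seg_end p lam s)) = fst x"
    using s(2) rim_node_rim_label by metis
  then have "seg_start p lam (rim_label ?y)"
    using seg_start_next_row[OF s(1) _ assms(2)] by simp
  then have "?y \<in> p_rim p lam"
    using seg_start_bounds y unfolding p_rim_eq by blast
  with \<open>?y \<notin> p_rim p lam\<close> show False ..
qed

lemma p_rim_full_segment:
  assumes "x \<in> p_rim p lam" "y \<in> rim lam" "y \<notin> p_rim p lam" "rim_label y = rim_label x + 1"
  obtains r where "1 \<le> r" "r \<le> length lam" "content (r, part lam r) = content x + (int p - 1)"
proof -
  obtain s where s: "seg_start p lam s" "rim_label x = seg_end p lam s"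
    using p_rim_segment_end[OF assms] .
  obtain r where r: "1 \<le> r" "r \<le> length lam" "s = rim_label (r, part lam r)"
    using seg_start_row_end[OF s(1)] by blast
  have "rim_label x < length (rim_list lam)" using rim_label_bounds(2)[OF assms(2)] assms(4) by simp
  then have "int (rim_label x) = int s + int p - 1"
    using s(2) p_pos unfolding seg_end_def by simp
  moreover have "int (rim_label x) = int (part lam 1) - content x"
    using assms(1) rim_label_bounds(3) unfolding p_rim_eq by blast
  moreover have "int s = int (part lam 1) - content (r, part lam r)"
    using rim_label_bounds(3)[OF row_end_in_rim[OF r(1,2)]] r(3) by simp
  ultimately have "content (r, part lam r) = content x + (int p - 1)" by linarith
  with r(1,2) show ?thesis by (rule that)
qed

end

locale self_conjugate_p_segments = p_segments +
  assumes self_conjugate: "self_conjugate lam"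
begin

lemma transpose_in_diagram: "(i, j) \<in> diagram lam \<Longrightarrow> (j, i) \<in> diagram lam"
  using self_conjugate self_conjugate_iff_sym_diagram by blast

lemma mem_rim_star_iff:
  "(i, j) \<in> rim_star p lam \<longleftrightarrow>
     (i, j) \<in> p_rim p lam \<and> i \<le> j \<or> (j, i) \<in> p_rim p lam \<and> j \<le> i"
  unfolding rim_star_def Let_def by auto

definition reduced_diagram :: "(nat \<times> nat) set" where
  "reduced_diagram = diagram lam - rim_star p lam"

lemma transpose_in_reduced_diagram:
  "(i, j) \<in> reduced_diagram \<Longrightarrow> (j, i) \<in> reduced_diagram"
  unfolding reduced_diagram_def using transpose_in_diagram mem_rim_star_iff by blast

lemma reduced_diagram_pos: "(i, j) \<in> reduced_diagram \<Longrightarrow> 1 \<le> i \<and> 1 \<le> j"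
  unfolding reduced_diagram_def by (simp add: mem_diagram)

lemma finite_reduced_diagram: "finite reduced_diagram"
proof (rule finite_subset)
  show "reduced_diagram \<subseteq> {..length lam} \<times> {..part lam 1}"
    unfolding reduced_diagram_def using row_le_length part_le_part_1
    by (auto simp: mem_diagram intro: order_trans)
qed simp

lemma reduced_diagram_left:
  assumes "(i, j) \<in> reduced_diagram" "2 \<le> j"
  shows "(i, j - 1) \<in> reduced_diagram"
proof (rule ccontr)
  have ij: "(i, j) \<in> diagram lam" "(i, j) \<notin> rim_star p lam"
    using assms(1) unfolding reduced_diagram_def by auto
  then have "(i, j - 1) \<in> diagram lam" using assms(2) by (auto simp: mem_diagram)
  moreover assume "(i, j - 1) \<notin> reduced_diagram"
  ultimately have "(i, j - 1) \<in> rim_star p lam" unfolding reduced_diagram_def by blast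
  then consider "(i, j - 1) \<in> p_rim p lam" "i \<le> j - 1" | "(j - 1, i) \<in> p_rim p lam" "j \<le> i"
    unfolding mem_rim_star_iff by (cases "i = j - 1") auto
  then show False
  proof cases
    case 1
    then have "(i + 1, j) \<notin> diagram lam"
      using assms(2) unfolding p_rim_eq by (simp add: mem_rim)
    then have "(i, j) \<in> rim lam" using ij(1) by (auto simp: mem_rim mem_diagram)
    moreover have "(i, j) \<notin> p_rim p lam" using ij(2) 1(2) mem_rim_star_iff by auto
    moreover have "(i, j - 1) \<in> rim lam" using 1(1) unfolding p_rim_eq by blast
    ultimately have "j - 1 = part lam i"
      using p_rim_segment_start[OF 1(1)] rim_label_next assms(2) by (simp add: content_def)
    then show False using ij(1) assms(2) by (simp add: mem_diagram, linarith)
  next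
    case 2
    have "(j - 1, i) \<in> rim lam" using 2(1) unfolding p_rim_eq by blast
    then have "(j, i + 1) \<notin> diagram lam" using assms(2) by (simp add: mem_rim)
    then have row_end: "part lam j = i"
      using transpose_in_diagram[OF ij(1)] by (simp add: mem_diagram)
    have "j \<le> length lam" using row_le_length transpose_in_diagram[OF ij(1)] .
    then have "(j, i) \<in> rim lam" using row_end_in_rim[of j] row_end assms(2) by simp
    then have "rim_label (j, i) = rim_label (j - 1, i) + 1"
      using rim_label_next \<open>(j - 1, i) \<in> rim lam\<close> assms(2) by (simp add: content_def)
    then have "(j, i) \<in> p_rim p lam"
      using p_rim_next_row_end[OF 2(1)] row_end assms(2) \<open>j \<le> length lam\<close> by simp
    then show False using ij(2) 2(2) mem_rim_star_iff by auto
  qed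
qed

lemma reduced_diagram_row_closed:
  assumes "(i, j) \<in> reduced_diagram" "1 \<le> j'" "j' \<le> j"
  shows "(i, j') \<in> reduced_diagram"
  using assms(3,1,2)
proof (induction j' rule: inc_induct)
  case (step n)
  then show ?case using reduced_diagram_left[of i "Suc n"] by simp
qed

lemma reduced_diagram_down_closed:
  assumes "(i, j) \<in> reduced_diagram" "1 \<le> i'" "i' \<le> i" "1 \<le> j'" "j' \<le> j"
  shows "(i', j') \<in> reduced_diagram"
proof -
  have "(i', j) \<in> reduced_diagram"
    using reduced_diagram_row_closed[OF transpose_in_reduced_diagram[OF assms(1)] assms(2,3)]
      transpose_in_reduced_diagram by blast
  then show ?thesis using reduced_diagram_row_closed assms(4,5) by blast
qed

lemma reduced_diagram_row_end:
  assumes "(m, a) \<in> reduced_diagram" "(m, a + 1) \<notin> reduced_diagram" "m \<le> a"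
  obtains r where "1 \<le> r" "r \<le> part lam r"
    and "content (r, part lam r) \<in> {content (m, a), content (m, a) + int p}"
proof -
  have ma: "(m, a) \<in> diagram lam" "(m, a) \<notin> rim_star p lam"
    using assms(1) unfolding reduced_diagram_def by auto
  then have "1 \<le> m" by (simp add: mem_diagram)
  have "(m, a + 1) \<in> p_rim p lam" if "(m, a + 1) \<in> diagram lam"
    using that assms(2,3) mem_rim_star_iff unfolding reduced_diagram_def by auto
  then consider
      (row_end) "(m, a + 1) \<notin> diagram lam"
    | (next_row_end) "(m, a + 1) \<in> p_rim p lam" "(m + 1, a + 1) \<in> diagram lam"
    | (segment_end) "(m, a + 1) \<in> p_rim p lam" "(m + 1, a + 1) \<notin> diagram lam"
    by blast
  then show ?thesis
  proof cases
    case row_end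
    then have "part lam m = a" using ma(1) by (simp add: mem_diagram)
    then show ?thesis using that[of m] \<open>1 \<le> m\<close> assms(3) by simp
  next
    case next_row_end
    then have "part lam (m + 1) = a + 1" unfolding p_rim_eq by (simp add: mem_rim mem_diagram)
    then show ?thesis using that[of "m + 1"] assms(3) by (simp add: content_def)
  next
    case segment_end
    have x: "(m, a + 1) \<in> rim lam" using segment_end(1) unfolding p_rim_eq by blast
    have y: "(m, a) \<in> rim lam" using ma(1) segment_end(2) by (simp add: mem_rim)
    have "(m, a) \<notin> p_rim p lam" using ma(2) assms(3) mem_rim_star_iff by auto
    moreover have "rim_label (m, a) = rim_label (m, a + 1) + 1"
      using rim_label_next[OF x y] by (simp add: content_def)
    ultimately obtain r where "1 \<le> r"
      and r: "content (r, part lam r) = content (m, a + 1) + (int p - 1)"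
      using p_rim_full_segment[OF segment_end(1) y] by blast
    then have "content (r, part lam r) = content (m, a) + int p" by (simp add: content_def)
    moreover have "r \<le> part lam r" using r assms(3) p_pos by (simp add: content_def)
    ultimately show ?thesis using that \<open>1 \<le> r\<close> by simp
  qed
qed

lemma reduced_diagram_row_end_hook:
  assumes hooks: "\<And>r. 1 \<le> r \<Longrightarrow> r \<le> part lam r \<Longrightarrow> \<not> int p dvd 2 * content (r, part lam r) + 1"
    and "(m, a) \<in> reduced_diagram" "(m, a + 1) \<notin> reduced_diagram" "m \<le> a"
  shows "\<not> int p dvd 2 * content (m, a) + 1"
proof -
  obtain r where "1 \<le> r" "r \<le> part lam r"
    and "content (r, part lam r) \<in> {content (m, a), content (m, a) + int p}"
    using reduced_diagram_row_end assms(2-4) by blast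
  moreover have "int p dvd 2 * (content (m, a) + int p) + 1" if "int p dvd 2 * content (m, a) + 1"
    using dvd_add[OF that dvd_triv_left[of "int p" 2]] by (simp add: algebra_simps)
  ultimately show ?thesis using hooks[of r] by auto
qed

end

theorem lemma3p22:
  fixes p :: nat and lam :: "nat list"
  assumes "prime p" and "odd p"
    and "BG_partition p lam" and "lam \<noteq> []"
  shows "\<exists>mu. is_partition mu \<and> diagram mu = diagram lam - rim_star p lam
              \<and> BG_partition p mu"
proof -
  interpret partition_list lam
    using assms(3) by unfold_locales (simp add: BG_partition_def)
  have self_conj: "self_conjugate lam"
    and hooks: "\<And>r. 1 \<le> r \<Longrightarrow> r \<le> part lam r \<Longrightarrow> \<not> int p dvd 2 * content (r, part lam r) + 1"
    using assms(3) unfolding BG_partition_iff by auto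
  interpret self_conjugate_p_segments lam p
    using assms(1,4) self_conj prime_ge_1_nat by unfold_locales auto
  obtain mu where mu: "is_partition mu" "diagram mu = reduced_diagram"
    using diagram_of_down_closed[OF finite_reduced_diagram] reduced_diagram_pos
      reduced_diagram_down_closed by blast
  interpret mu: partition_list mu by unfold_locales (fact mu(1))
  have "self_conjugate mu"
    using mu(2) transpose_in_reduced_diagram unfolding mu.self_conjugate_iff_sym_diagram by blast
  moreover have "\<not> int p dvd 2 * content (m, part mu m) + 1" if "1 \<le> m" "m \<le> part mu m" for m
    using reduced_diagram_row_end_hook[OF hooks, of m "part mu m"] that
    unfolding mu(2)[symmetric] by (auto simp: mem_diagram)
  ultimately show ?thesis
    using mu mu.BG_partition_iff unfolding reduced_diagram_def by blast
qed

end
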